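(* Let $(S,\Delta,\mathbb{P})$ be a probability space, $(U,d)$ a separable metric space, $\mathfrak{X}$ the set of $U$-valued random variables on $S$, $\mathcal{I}$ an ideal on $\mathbb{N}$ with $\mathbb{N}\notin\mathcal{I}$, $r\geq 0$, and $\{X_n\}_{n\in\mathbb{N}}$ a sequence in $\mathfrak{X}$. Then the set $\mathcal{I}^{\mathbb{P}}\text{-}LIM^rX_i$ is bounded in $(\mathfrak{X}^0,\rho)$ and its $\rho$-diameter is at most $\min\{1,2r\}$. Moreover, this bound cannot be reduced in general: for every $r$ with $0<2r<1$ there exist a probability space and a sequence of real-valued random variables (with $U=\mathbb{R}$ and the usual metric) such that, for the ideal $\mathcal{I}_{1/n}=\{A\subseteq\mathbb{N}:\sum_{n\in A}\frac1n<\infty\}$, the set $\mathcal{I}_{1/n}^{\mathbb{P}}\text{-}LIM^rX_i$ has $\rho$-diameter exactly $2r$.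
   Context: The Ky Fan metric is $\rho(X,Y)=\inf\{\varepsilon>0:\mathbb{P}(d(X,Y)>\varepsilon)\leq\varepsilon\}$; $\mathfrak{X}^0$ is the set of equivalence classes of $\mathfrak{X}$ under almost sure equality, on which $\rho$ is a metric. An ideal on $\mathbb{N}$ is a family $\mathcal{I}\subseteq\mathcal{P}(\mathbb{N})$ with $\varnothing\in\mathcal{I}$, closed under finite unions and under subsets. A sequence $\{X_n\}$ in $\mathfrak{X}$ is rough $\mathcal{I}$-convergent in probability to $X_*\in\mathfrak{X}$ with degree of roughness $r$ if $\{n\in\mathbb{N}:\mathbb{P}(d(X_n,X_* )>r+\varepsilon)>\delta\}\in\mathcal{I}$ for every $\varepsilon,\delta>0$; $\mathcal{I}^{\mathbb{P}}\text{-}LIM^rX_i$ denotes the set of all such $X_*$ (regarded as a subset of $\mathfrak{X}^0$). *)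

theory Defs
  imports "HOL-Probability.Probability"
begin

definition nat_ideal :: "nat set set \<Rightarrow> bool" where
  "nat_ideal I \<longleftrightarrow> {} \<in> I \<and> (\<forall>A\<in>I. \<forall>B\<in>I. A \<union> B \<in> I) \<and> (\<forall>A\<in>I. \<forall>B. B \<subseteq> A \<longrightarrow> B \<in> I)"

text \<open>Ky Fan metric on random variables (a pseudometric on representatives).\<close>
definition ky_fan :: "'s measure \<Rightarrow> ('s \<Rightarrow> 'a::metric_space) \<Rightarrow> ('s \<Rightarrow> 'a) \<Rightarrow> real" where
  "ky_fan M X Y = Inf {e. 0 < e \<and> measure M {s \<in> space M. e < dist (X s) (Y s)} \<le> e}"

definition rough_I_lim_prob ::
  "'s measure \<Rightarrow> nat set set \<Rightarrow> real \<Rightarrow> (nat \<Rightarrow> 's \<Rightarrow> 'a::metric_space) \<Rightarrow> ('s \<Rightarrow> 'a) set" where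
  "rough_I_lim_prob M I r X =
     {Z \<in> borel_measurable M. \<forall>\<epsilon>>0. \<forall>\<delta>>0.
        {n. \<delta> < measure M {s \<in> space M. r + \<epsilon> < dist (X n s) (Z s)}} \<in> I}"

definition ky_fan_diam :: "'s measure \<Rightarrow> ('s \<Rightarrow> 'a::metric_space) set \<Rightarrow> real" where
  "ky_fan_diam M L = (SUP p \<in> L \<times> L. ky_fan M (fst p) (snd p))"

definition I_harmonic :: "nat set set" where
  "I_harmonic = {A. summable (\<lambda>n. if n \<in> A then 1 / real n else 0)}"

end

theory Submission
  imports Defs
begin

text \<open>
  If \<open>Y\<close> and \<open>Z\<close> are both rough limits of degree \<open>r\<close> and \<open>e > 2 r\<close>, then the
  sets of indices \<open>n\<close> where \<open>X\<^sub>n\<close> is far from \<open>Y\<close> or far from \<open>Z\<close> with probability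
  more than \<open>e/2\<close> both lie in the proper ideal \<open>I\<close>, so some \<open>n\<close> avoids both.
  By the triangle inequality through \<open>X\<^sub>n\<close>, \<open>d(Y, Z) > e\<close> has probability at
  most \<open>e\<close>, whence \<open>\<rho>(Y, Z) \<le> e\<close>. The bound \<open>\<rho> \<le> 1\<close> holds for any two random
  variables. For sharpness, take the point mass at \<open>0\<close> and \<open>X\<^sub>n = 0\<close>: the constants
  \<open>r\<close> and \<open>-r\<close> are then rough limits (for any ideal) at Ky Fan distance \<open>2 r\<close>.
\<close>

lemma nat_ideal_empty: "nat_ideal I \<Longrightarrow> {} \<in> I"
  unfolding nat_ideal_def by blast

lemma nat_ideal_proper_avoid_Un:
  assumes "nat_ideal I" "UNIV \<notin> I" "A \<in> I" "B \<in> I"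
  obtains n where "n \<notin> A" "n \<notin> B"
proof -
  have "A \<union> B \<in> I" using assms(1,3,4) unfolding nat_ideal_def by blast
  then have "A \<union> B \<noteq> UNIV" using assms(2) by metis
  then show ?thesis using that by blast
qed

lemma nat_ideal_I_harmonic: "nat_ideal I_harmonic"
  unfolding nat_ideal_def
proof (intro conjI ballI allI impI)
  show "{} \<in> I_harmonic"
    by (simp add: I_harmonic_def)
next
  fix A B assume "A \<in> I_harmonic" "B \<in> I_harmonic"
  then have "summable (\<lambda>n. (if n \<in> A then 1 / real n else 0) + (if n \<in> B then 1 / real n else 0))"
    unfolding I_harmonic_def by (auto intro: summable_add)
  then show "A \<union> B \<in> I_harmonic"
    unfolding I_harmonic_def mem_Collect_eq by (rule summable_comparison_test'[where N = 0]) auto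
next
  fix A B assume "A \<in> I_harmonic" "B \<subseteq> A"
  from \<open>A \<in> I_harmonic\<close> show "B \<in> I_harmonic"
    unfolding I_harmonic_def mem_Collect_eq
    by (rule summable_comparison_test'[where N = 0]) (use \<open>B \<subseteq> A\<close> in auto)
qed

lemma UNIV_not_in_I_harmonic: "UNIV \<notin> I_harmonic"
  unfolding I_harmonic_def using not_summable_harmonic
  by (simp add: inverse_eq_divide)

lemma ky_fan_le:
  assumes "0 < e" "measure M {s \<in> space M. e < dist (Y s) (Z s)} \<le> e"
  shows "ky_fan M Y Z \<le> e"
  unfolding ky_fan_def by (rule cInf_lower) (use assms in \<open>auto intro: bdd_belowI[of _ 0]\<close>)

lemma ky_fan_le_one: "prob_space M \<Longrightarrow> ky_fan M Y Z \<le> 1"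
  by (rule ky_fan_le) (simp_all add: prob_space.prob_le_1)

lemma ky_fan_ge_min_one:
  assumes "prob_space M" and dist_ge: "\<And>s. s \<in> space M \<Longrightarrow> d \<le> dist (Y s) (Z s)"
  shows "min 1 d \<le> ky_fan M Y Z"
  unfolding ky_fan_def
proof (rule cInf_greatest)
  show "{e. 0 < e \<and> measure M {s \<in> space M. e < dist (Y s) (Z s)} \<le> e} \<noteq> {}"
    using prob_space.prob_le_1[OF assms(1)] by (auto intro!: exI[of _ 1])
next
  fix e assume "e \<in> {e. 0 < e \<and> measure M {s \<in> space M. e < dist (Y s) (Z s)} \<le> e}"
  then have tail: "measure M {s \<in> space M. e < dist (Y s) (Z s)} \<le> e" by simp
  show "min 1 d \<le> e"
  proof (rule ccontr)
    assume "\<not> min 1 d \<le> e"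
    then have "{s \<in> space M. e < dist (Y s) (Z s)} = space M"
      using dist_ge by force
    then show False
      using tail \<open>\<not> min 1 d \<le> e\<close> prob_space.prob_space[OF assms(1)] by simp
  qed
qed

lemma measure_dist_gt_le_add:
  fixes X Y Z :: "'s \<Rightarrow> 'a::{metric_space, second_countable_topology}"
  assumes "finite_measure M"
    and [measurable]: "X \<in> borel_measurable M" "Y \<in> borel_measurable M" "Z \<in> borel_measurable M"
  shows "measure M {s \<in> space M. a + b < dist (Y s) (Z s)}
    \<le> measure M {s \<in> space M. a < dist (X s) (Y s)} + measure M {s \<in> space M. b < dist (X s) (Z s)}"
proof -
  interpret finite_measure M by (rule assms(1))
  have "{s \<in> space M. a + b < dist (Y s) (Z s)}
      \<subseteq> {s \<in> space M. a < dist (X s) (Y s)} \<union> {s \<in> space M. b < dist (X s) (Z s)}"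
  proof (safe)
    fix s assume "s \<in> space M" "a + b < dist (Y s) (Z s)" "\<not> b < dist (X s) (Z s)"
    then show "a < dist (X s) (Y s)"
      using dist_triangle3[of "Y s" "Z s" "X s"] by (simp add: dist_commute)
  qed
  then have "measure M {s \<in> space M. a + b < dist (Y s) (Z s)}
      \<le> measure M ({s \<in> space M. a < dist (X s) (Y s)} \<union> {s \<in> space M. b < dist (X s) (Z s)})"
    by (intro finite_measure_mono) measurable
  also have "\<dots> \<le> measure M {s \<in> space M. a < dist (X s) (Y s)} + measure M {s \<in> space M. b < dist (X s) (Z s)}"
    by (intro measure_subadditive) measurable
  finally show ?thesis .
qed

lemma rough_I_lim_prob_ky_fan_le_twice:
  fixes X :: "nat \<Rightarrow> 's \<Rightarrow> 'a::{metric_space, second_countable_topology}"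
  assumes "prob_space M" "nat_ideal I" "UNIV \<notin> I" "0 \<le> r"
    and X_meas: "\<And>n. X n \<in> borel_measurable M"
    and Y: "Y \<in> rough_I_lim_prob M I r X" and Z: "Z \<in> rough_I_lim_prob M I r X"
  shows "ky_fan M Y Z \<le> 2 * r"
proof (rule dense_ge)
  fix e assume "2 * r < e"
  define \<epsilon> where "\<epsilon> = (e - 2 * r) / 2"
  have "0 < \<epsilon>" "0 < e / 2" and e_eq: "e = (r + \<epsilon>) + (r + \<epsilon>)"
    using \<open>2 * r < e\<close> \<open>0 \<le> r\<close> by (simp_all add: \<epsilon>_def)
  then have "{n. e / 2 < measure M {s \<in> space M. r + \<epsilon> < dist (X n s) (Y s)}} \<in> I"
    and "{n. e / 2 < measure M {s \<in> space M. r + \<epsilon> < dist (X n s) (Z s)}} \<in> I"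
    using Y Z unfolding rough_I_lim_prob_def by blast+
  then obtain n where
      n_Y: "measure M {s \<in> space M. r + \<epsilon> < dist (X n s) (Y s)} \<le> e / 2" and
      n_Z: "measure M {s \<in> space M. r + \<epsilon> < dist (X n s) (Z s)} \<le> e / 2"
    by (rule nat_ideal_proper_avoid_Un[OF assms(2,3)]) (simp add: not_less)
  have "measure M {s \<in> space M. e < dist (Y s) (Z s)}
      \<le> measure M {s \<in> space M. r + \<epsilon> < dist (X n s) (Y s)}
        + measure M {s \<in> space M. r + \<epsilon> < dist (X n s) (Z s)}"
    unfolding e_eq using Y Z unfolding rough_I_lim_prob_def
    by (intro measure_dist_gt_le_add prob_space.finite_measure[OF assms(1)] X_meas) auto
  also have "\<dots> \<le> e / 2 + e / 2"
    using n_Y n_Z by linarith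
  finally show "ky_fan M Y Z \<le> e"
    using \<open>0 < e / 2\<close> by (intro ky_fan_le) simp_all
qed

lemma rough_I_lim_prob_if_dist_le:
  assumes "nat_ideal I" "Z \<in> borel_measurable M"
    and "\<And>n s. s \<in> space M \<Longrightarrow> dist (X n s) (Z s) \<le> r"
  shows "Z \<in> rough_I_lim_prob M I r X"
proof -
  have "{n. \<delta> < measure M {s \<in> space M. r + \<epsilon> < dist (X n s) (Z s)}} = {}"
    if "0 < \<epsilon>" "0 < \<delta>" for \<epsilon> \<delta> :: real
  proof -
    have "\<not> r + \<epsilon> < dist (X n s) (Z s)" if "s \<in> space M" for n s
      using assms(3)[OF that, where n = n] \<open>0 < \<epsilon>\<close> by linarith
    then have no_far: "{s \<in> space M. r + \<epsilon> < dist (X n s) (Z s)} = {}" for n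
      by blast
    show ?thesis
      using that(2) by (simp add: no_far)
  qed
  then show ?thesis
    using assms(2) nat_ideal_empty[OF assms(1)] unfolding rough_I_lim_prob_def by simp
qed

lemma ky_fan_diam_eqI:
  assumes "\<And>Y Z. Y \<in> L \<Longrightarrow> Z \<in> L \<Longrightarrow> ky_fan M Y Z \<le> d"
    and "Y\<^sub>0 \<in> L" "Z\<^sub>0 \<in> L" "d \<le> ky_fan M Y\<^sub>0 Z\<^sub>0"
  shows "ky_fan_diam M L = d"
  unfolding ky_fan_diam_def
proof (rule antisym)
  show "(SUP p\<in>L \<times> L. ky_fan M (fst p) (snd p)) \<le> d"
    using assms by (intro cSUP_least) auto
  show "d \<le> (SUP p\<in>L \<times> L. ky_fan M (fst p) (snd p))"
  proof (rule cSUP_upper2[where x = "(Y\<^sub>0, Z\<^sub>0)"])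
    show "bdd_above ((\<lambda>p. ky_fan M (fst p) (snd p)) ` (L \<times> L))"
      using assms(1) by (intro bdd_aboveI[where M = d]) auto
  qed (use assms(2-4) in auto)
qed

lemma ky_fan_diam_rough_I_lim_prob_zero_seq:
  fixes r :: real
  defines "M \<equiv> return borel (0::real)"
  assumes "0 < 2 * r" "2 * r < 1"
  shows "ky_fan_diam M (rough_I_lim_prob M I_harmonic r (\<lambda>n s. 0::real)) = 2 * r"
proof -
  let ?L = "rough_I_lim_prob M I_harmonic r (\<lambda>n s. 0::real)"
  have prob: "prob_space M"
    unfolding M_def by (rule prob_space_return) simp
  have const_lim: "(\<lambda>s. c) \<in> ?L" if "\<bar>c\<bar> \<le> r" for c :: real
    using that by (intro rough_I_lim_prob_if_dist_le nat_ideal_I_harmonic) (simp_all add: dist_real_def)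
  show ?thesis
  proof (rule ky_fan_diam_eqI)
    show "ky_fan M Y Z \<le> 2 * r" if "Y \<in> ?L" "Z \<in> ?L" for Y Z
      using assms(2) that
      by (intro rough_I_lim_prob_ky_fan_le_twice[OF prob nat_ideal_I_harmonic UNIV_not_in_I_harmonic])
        simp_all
    show "(\<lambda>s. r) \<in> ?L" "(\<lambda>s. - r) \<in> ?L"
      using assms(2) by (auto intro!: const_lim)
    show "2 * r \<le> ky_fan M (\<lambda>s. r) (\<lambda>s. - r)"
      using ky_fan_ge_min_one[OF prob, of "2 * r" "\<lambda>s. r" "\<lambda>s. - r"] assms(3)
      by (simp add: dist_real_def)
  qed
qed

theorem theorem2p1:
  shows "(\<forall>(M :: 's measure) I (r::real) (X :: nat \<Rightarrow> 's \<Rightarrow> 'a::{metric_space, second_countable_topology}).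
            prob_space M \<and> nat_ideal I \<and> UNIV \<notin> I \<and> 0 \<le> r \<and> (\<forall>n. X n \<in> borel_measurable M)
            \<longrightarrow> (\<exists>B. \<forall>Y\<in>rough_I_lim_prob M I r X. \<forall>Z\<in>rough_I_lim_prob M I r X. ky_fan M Y Z \<le> B)
              \<and> (\<forall>Y\<in>rough_I_lim_prob M I r X. \<forall>Z\<in>rough_I_lim_prob M I r X.
                    ky_fan M Y Z \<le> min 1 (2 * r)))
       \<and> (\<forall>r::real. 0 < 2 * r \<and> 2 * r < 1 \<longrightarrow>
            (\<exists>(M :: real measure) (X :: nat \<Rightarrow> real \<Rightarrow> real).
               prob_space M \<and> (\<forall>n. X n \<in> borel_measurable M) \<and>
               ky_fan_diam M (rough_I_lim_prob M I_harmonic r X) = 2 * r))"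
proof (intro conjI allI impI)
  fix M :: "'s measure" and I and r :: real and X :: "nat \<Rightarrow> 's \<Rightarrow> 'a"
  assume "prob_space M \<and> nat_ideal I \<and> UNIV \<notin> I \<and> 0 \<le> r \<and> (\<forall>n. X n \<in> borel_measurable M)"
  then show "\<forall>Y\<in>rough_I_lim_prob M I r X. \<forall>Z\<in>rough_I_lim_prob M I r X.
      ky_fan M Y Z \<le> min 1 (2 * r)"
    using rough_I_lim_prob_ky_fan_le_twice ky_fan_le_one by (metis min.boundedI)
  then show "\<exists>B. \<forall>Y\<in>rough_I_lim_prob M I r X. \<forall>Z\<in>rough_I_lim_prob M I r X. ky_fan M Y Z \<le> B"
    by blast
next
  fix r :: real
  assume "0 < 2 * r \<and> 2 * r < 1"
  then show "\<exists>(M :: real measure) (X :: nat \<Rightarrow> real \<Rightarrow> real). prob_space M \<and>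
      (\<forall>n. X n \<in> borel_measurable M) \<and> ky_fan_diam M (rough_I_lim_prob M I_harmonic r X) = 2 * r"
    using ky_fan_diam_rough_I_lim_prob_zero_seq prob_space_return[of "0::real" borel]
    by (intro exI[of _ "return borel 0"] exI[of _ "\<lambda>n s. 0"]) auto
qed

end
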